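(* Let $E$ be a finite set and $\mathscr C$ a collection of nonempty, pairwise incomparable (under inclusion) subsets of $E$. Then $\mathscr C$ is the set of circuits of a matroid on $E$ if and only if $\mathscr C$ satisfies the following axiom (C3)$''$: whenever $C_1,C_2\in\mathscr C$ with $e_1\in C_1-C_2$, $e_2\in C_2-C_1$, $e\in C_1\cap C_2$, and $(C_1-e_1)\cup(C_2-e_2)$ contains no member of $\mathscr C$, there is $C_3\in\mathscr C$ with $\{e_1,e_2\}\subseteq C_3\subseteq (C_1\cup C_2)-e$. *)

theory Defs
  imports Main
begin

definition matroid :: "'a set \<Rightarrow> 'a set set \<Rightarrow> bool" where
  "matroid E \<I> \<longleftrightarrow>
     finite E \<and>
     (\<forall>X\<in>\<I>. X \<subseteq> E) \<and>
     {} \<in> \<I> \<and>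
     (\<forall>X Y. X \<in> \<I> \<longrightarrow> Y \<subseteq> X \<longrightarrow> Y \<in> \<I>) \<and>
     (\<forall>X Y. X \<in> \<I> \<longrightarrow> Y \<in> \<I> \<longrightarrow> card X < card Y \<longrightarrow>
        (\<exists>e \<in> Y - X. insert e X \<in> \<I>))"

definition circuits :: "'a set \<Rightarrow> 'a set set \<Rightarrow> 'a set set" where
  "circuits E \<I> = {C. C \<subseteq> E \<and> C \<notin> \<I> \<and> (\<forall>D. D \<subset> C \<longrightarrow> D \<in> \<I>)}"

definition C3pp :: "'a set set \<Rightarrow> bool" where
  "C3pp \<C> \<longleftrightarrow>
    (\<forall>C1\<in>\<C>. \<forall>C2\<in>\<C>. \<forall>e1 e2 e.
       e1 \<in> C1 - C2 \<longrightarrow> e2 \<in> C2 - C1 \<longrightarrow> e \<in> C1 \<inter> C2 \<longrightarrow>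
       \<not> (\<exists>C\<in>\<C>. C \<subseteq> (C1 - {e1}) \<union> (C2 - {e2})) \<longrightarrow>
       (\<exists>C3\<in>\<C>. {e1, e2} \<subseteq> C3 \<and> C3 \<subseteq> (C1 \<union> C2) - {e}))"

end

theory Submission
  imports Defs
begin

text \<open>Both directions rest on the fact that adding one element to an independent set creates
  at most one circuit. In a matroid this follows from augmentation. Given circuits as in
  (C3)'', the set \<open>X = (C1 - e1) \<union> (C2 - e2)\<close> is independent and \<open>(C1 \<union> C2) - e\<close> is one
  element larger, hence dependent; a circuit \<open>C3\<close> inside it contains \<open>e1\<close>, since otherwise
  \<open>C3\<close> and \<open>C2\<close> would be two different circuits in \<open>insert e2 X\<close>, and likewise \<open>e2\<close>.
  Conversely, (C3)'' implies ordinary circuit elimination by induction on \<open>card (C1 \<union> C2)\<close>;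
  elimination gives the uniqueness of the circuit in \<open>insert e X\<close>, and that drives an exchange
  argument proving augmentation for the circuit-free subsets of \<open>E\<close>.\<close>

context
  fixes E :: "'a set" and I :: "'a set set"
  assumes matroid: "matroid E I"
begin

lemma indep_subset_ground: "X \<in> I \<Longrightarrow> X \<subseteq> E"
  using matroid unfolding matroid_def by simp

lemma finite_subset_ground: "X \<subseteq> E \<Longrightarrow> finite X"
  using matroid unfolding matroid_def by (auto intro: finite_subset)

lemma indep_subset: "X \<in> I \<Longrightarrow> Y \<subseteq> X \<Longrightarrow> Y \<in> I"
  using matroid unfolding matroid_def by simp

lemma indep_augment: "X \<in> I \<Longrightarrow> Y \<in> I \<Longrightarrow> card X < card Y \<Longrightarrow> \<exists>e\<in>Y - X. insert e X \<in> I"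
  using matroid unfolding matroid_def by simp

lemma dependent_contains_circuit:
  assumes "D \<subseteq> E" and "D \<notin> I"
  shows "\<exists>C\<in>circuits E I. C \<subseteq> D"
proof -
  let ?dep = "{D'. D' \<subseteq> D \<and> D' \<notin> I}"
  have "finite ?dep"
    using finite_subset_ground[OF assms(1)] by simp
  then obtain C where C: "C \<in> ?dep" and minimal: "\<forall>D'\<in>?dep. D' \<subseteq> C \<longrightarrow> C = D'"
    using finite_has_minimal2[of ?dep D] assms(2) by auto
  have "D' \<in> I" if "D' \<subset> C" for D'
    using minimal C that by blast
  then have "C \<in> circuits E I"
    unfolding circuits_def using C assms(1) by blast
  with C show ?thesis by blast
qed

lemma ex_maximal_indep_superset:
  assumes "finite S" and "B \<in> I" and "B \<subseteq> S"
  obtains J where "J \<in> I" "B \<subseteq> J" "J \<subseteq> S" "\<forall>x\<in>S - J. insert x J \<notin> I"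
proof -
  let ?ext = "{J. J \<in> I \<and> B \<subseteq> J \<and> J \<subseteq> S}"
  have "finite ?ext"
    by (rule finite_subset[of _ "Pow S"]) (use assms(1) in auto)
  then obtain J where J: "J \<in> ?ext" and maximal: "\<forall>K\<in>?ext. J \<subseteq> K \<longrightarrow> J = K"
    using finite_has_maximal2[of ?ext B] assms(2,3) by auto
  have "insert x J \<notin> I" if "x \<in> S - J" for x
    using maximal J that by blast
  with J that show ?thesis by blast
qed

lemma maximal_indep_card_ge:
  assumes "J \<in> I" and "\<forall>x\<in>S - J. insert x J \<notin> I" and "K \<in> I" and "K \<subseteq> S"
  shows "card K \<le> card J"
proof (rule ccontr)
  assume "\<not> card K \<le> card J"
  then obtain x where "x \<in> K - J" "insert x J \<in> I"
    using indep_augment[OF assms(1,3)] by auto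
  with assms(2,4) show False by blast
qed

text \<open>A maximal independent subset of \<open>insert a X - {e}\<close> through
  \<open>C - {e}\<close> is also maximal in \<open>insert a X\<close>, so it is as large as \<open>X\<close>; but it misses a point
  of \<open>C'\<close>, so it is smaller than \<open>insert a X - {e}\<close>.\<close>
lemma circuit_unique_in_insert:
  assumes X: "X \<in> I" and C: "C \<in> circuits E I" and C': "C' \<in> circuits E I"
    and "C \<subseteq> insert a X" and "C' \<subseteq> insert a X"
  shows "C = C'"
proof (rule ccontr)
  assume "C \<noteq> C'"
  moreover have "\<not> C \<subset> C'" using C C' unfolding circuits_def by blast
  ultimately obtain e where e: "e \<in> C" "e \<notin> C'" by blast
  define S where "S = insert a X - {e}"
  have fin: "finite (insert a X)"
    using finite_subset_ground[OF indep_subset_ground[OF X]] by simp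
  have "C - {e} \<in> I" "C - {e} \<subseteq> S"
    using C e \<open>C \<subseteq> insert a X\<close> unfolding circuits_def S_def by blast+
  then obtain J where J: "J \<in> I" "C - {e} \<subseteq> J" "J \<subseteq> S" and max_S: "\<forall>x\<in>S - J. insert x J \<notin> I"
    using ex_maximal_indep_superset[of S] fin unfolding S_def by blast
  have "insert e J \<notin> I"
    using indep_subset[of "insert e J" C] J(2) C unfolding circuits_def by blast
  then have "\<forall>x\<in>insert a X - J. insert x J \<notin> I"
    using max_S unfolding S_def by blast
  then have "card X \<le> card J"
    using maximal_indep_card_ge[OF J(1) _ X] by blast
  moreover have "C' \<subseteq> S" using e \<open>C' \<subseteq> insert a X\<close> unfolding S_def by blast
  then have "J \<noteq> S"
    using indep_subset[of J C'] J(1) C' unfolding circuits_def by blast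
  then have "card J < card S"
    using J(3) fin by (simp add: S_def psubset_card_mono)
  moreover have "card S = card (insert a X) - 1"
    using e \<open>C \<subseteq> insert a X\<close> unfolding S_def by (intro card_Diff_singleton) blast
  moreover have "card (insert a X) \<le> Suc (card X)"
    using fin by (simp add: card_insert_if)
  ultimately show False by linarith
qed

lemma C3pp_circuits: "C3pp (circuits E I)"
  unfolding C3pp_def
proof (intro ballI allI impI)
  fix C1 C2 e1 e2 e
  assume C1: "C1 \<in> circuits E I" and C2: "C2 \<in> circuits E I"
    and e1: "e1 \<in> C1 - C2" and e2: "e2 \<in> C2 - C1" and e: "e \<in> C1 \<inter> C2"
    and no_circuit: "\<not> (\<exists>C\<in>circuits E I. C \<subseteq> C1 - {e1} \<union> (C2 - {e2}))"
  define X where "X = C1 - {e1} \<union> (C2 - {e2})"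
  define Y where "Y = C1 \<union> C2 - {e}"
  have C1_E: "C1 \<subseteq> E" and C1_dep: "C1 \<notin> I" and C2_E: "C2 \<subseteq> E" and C2_dep: "C2 \<notin> I"
    using C1 C2 unfolding circuits_def by blast+
  have XE: "X \<subseteq> E" and YE: "Y \<subseteq> E"
    using C1_E C2_E unfolding X_def Y_def by blast+
  have XI: "X \<in> I"
    using dependent_contains_circuit[OF XE] no_circuit unfolding X_def by blast
  have "C1 \<union> C2 = insert e1 (insert e2 X)" "e1 \<notin> X" "e2 \<notin> X" "e1 \<noteq> e2"
    using e1 e2 unfolding X_def by blast+
  then have "card (C1 \<union> C2) = Suc (Suc (card X))"
    using finite_subset_ground[OF XE] by simp
  moreover have "C1 \<union> C2 = insert e Y" "e \<notin> Y"
    using e unfolding Y_def by blast+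
  then have "card (C1 \<union> C2) = Suc (card Y)"
    using finite_subset_ground[OF YE] by simp
  ultimately have "card X < card Y" by simp
  have C1X: "C1 \<subseteq> insert e1 X" and C2X: "C2 \<subseteq> insert e2 X"
    unfolding X_def by blast+
  have "Y \<notin> I"
  proof
    assume "Y \<in> I"
    then obtain y where y: "y \<in> Y - X" "insert y X \<in> I"
      using indep_augment[OF XI _ \<open>card X < card Y\<close>] by blast
    then have "y = e1 \<or> y = e2" unfolding X_def Y_def by blast
    then show False
      using indep_subset[OF y(2)] C1X C2X C1_dep C2_dep by blast
  qed
  then obtain C3 where C3: "C3 \<in> circuits E I" "C3 \<subseteq> Y"
    using dependent_contains_circuit[OF YE] by blast
  have Y_sub: "Y \<subseteq> insert e1 (insert e2 X)" unfolding X_def Y_def by blast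
  have "e1 \<in> C3"
  proof (rule ccontr)
    assume "e1 \<notin> C3"
    then have "C2 = C3"
      using circuit_unique_in_insert[OF XI C2 C3(1) C2X] C3(2) Y_sub by blast
    then show False using C3(2) e unfolding Y_def by blast
  qed
  moreover have "e2 \<in> C3"
  proof (rule ccontr)
    assume "e2 \<notin> C3"
    then have "C1 = C3"
      using circuit_unique_in_insert[OF XI C1 C3(1) C1X] C3(2) Y_sub by blast
    then show False using C3(2) e unfolding Y_def by blast
  qed
  ultimately show "\<exists>C3\<in>circuits E I. {e1, e2} \<subseteq> C3 \<and> C3 \<subseteq> C1 \<union> C2 - {e}"
    using C3 unfolding Y_def by blast
qed

end

definition circuit_elim :: "'a set set \<Rightarrow> bool" where
  "circuit_elim \<C> \<longleftrightarrow>
    (\<forall>C1\<in>\<C>. \<forall>C2\<in>\<C>. \<forall>e. C1 \<noteq> C2 \<longrightarrow> e \<in> C1 \<inter> C2 \<longrightarrow> (\<exists>C\<in>\<C>. C \<subseteq> C1 \<union> C2 - {e}))"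

definition indep_of :: "'a set \<Rightarrow> 'a set set \<Rightarrow> 'a set set" where
  "indep_of E \<C> = {X. X \<subseteq> E \<and> (\<forall>C\<in>\<C>. \<not> C \<subseteq> X)}"

text \<open>If (C3)'' does not apply directly, some \<open>D \<in> \<C>\<close> lies in \<open>(C1 - {e1}) \<union> (C2 - {e2})\<close>;
  either \<open>e \<notin> D\<close>, or eliminating \<open>e\<close> from \<open>D\<close> and \<open>C1\<close> is a smaller instance, as
  \<open>D \<union> C1\<close> misses \<open>e2\<close>.\<close>
lemma circuit_elim_if_C3pp:
  assumes finite: "\<forall>C\<in>\<C>. finite C"
    and incomparable: "\<forall>C1\<in>\<C>. \<forall>C2\<in>\<C>. C1 \<subseteq> C2 \<longrightarrow> C1 = C2"
    and C3pp: "C3pp \<C>"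
  shows "circuit_elim \<C>"
  unfolding circuit_elim_def
proof (intro ballI allI impI)
  fix C1 C2 e
  assume "C1 \<in> \<C>" "C2 \<in> \<C>" "C1 \<noteq> C2" "e \<in> C1 \<inter> C2"
  then show "\<exists>C\<in>\<C>. C \<subseteq> C1 \<union> C2 - {e}"
  proof (induction "card (C1 \<union> C2)" arbitrary: C1 C2 rule: less_induct)
    case less
    have "\<not> C1 \<subseteq> C2" "\<not> C2 \<subseteq> C1"
      using incomparable less.prems(1-3) by metis+
    then obtain e1 e2 where e1: "e1 \<in> C1 - C2" and e2: "e2 \<in> C2 - C1" by blast
    show ?case
    proof (cases "\<exists>D\<in>\<C>. D \<subseteq> (C1 - {e1}) \<union> (C2 - {e2})")
      case True
      then obtain D where D: "D \<in> \<C>" "D \<subseteq> (C1 - {e1}) \<union> (C2 - {e2})" by blast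
      show ?thesis
      proof (cases "e \<in> D")
        case True
        have "D \<union> C1 \<subset> C1 \<union> C2" using D e1 e2 by blast
        then have "card (D \<union> C1) < card (C1 \<union> C2)"
          using finite less.prems(1,2) by (simp add: psubset_card_mono)
        moreover have "D \<noteq> C1" using D e1 by blast
        moreover have "e \<in> D \<inter> C1" using True less.prems(4) by blast
        ultimately obtain C where "C \<in> \<C>" "C \<subseteq> D \<union> C1 - {e}"
          using less.hyps[OF _ D(1) less.prems(1)] by blast
        with D show ?thesis by blast
      qed (use D in blast)
    next
      case False
      then show ?thesis
        using C3pp[unfolded C3pp_def, rule_format, OF less.prems(1,2) e1 e2 less.prems(4) False]
        by blast
    qed
  qed
qed

lemma circuit_unique_in_insert_if_elim:
  assumes "circuit_elim \<C>" and "\<forall>C\<in>\<C>. \<not> C \<subseteq> X"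
    and "C \<in> \<C>" "C' \<in> \<C>" "C \<subseteq> insert a X" "C' \<subseteq> insert a X"
  shows "C = C'"
proof (rule ccontr)
  assume "C \<noteq> C'"
  moreover have "a \<in> C" "a \<in> C'" using assms(2-6) by blast+
  ultimately obtain D where "D \<in> \<C>" "D \<subseteq> C \<union> C' - {a}"
    using assms(1,3,4) unfolding circuit_elim_def by blast
  with assms(2,5,6) show False by blast
qed

lemma indep_of_subset: "X \<in> indep_of E \<C> \<Longrightarrow> Y \<subseteq> X \<Longrightarrow> Y \<in> indep_of E \<C>"
  unfolding indep_of_def by blast

text \<open>For \<open>e \<in> X - Y\<close>, if some \<open>insert e (Y - {f})\<close> with
  \<open>f \<in> Y - X\<close> is independent it replaces \<open>Y\<close>. Otherwise each of these sets contains a member of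
  \<open>\<C>\<close>, necessarily the unique one in \<open>insert e Y\<close>; that member then avoids \<open>Y - X\<close> and lies
  in \<open>X\<close>.\<close>
lemma indep_of_augment:
  assumes "finite E" and elim: "circuit_elim \<C>"
    and X: "X \<in> indep_of E \<C>" and "Y \<in> indep_of E \<C>" and "card X < card Y"
  shows "\<exists>y\<in>Y - X. insert y X \<in> indep_of E \<C>"
  using assms(4,5)
proof (induction "card (X - Y)" arbitrary: Y rule: less_induct)
  case less
  have XY_E: "X \<subseteq> E" "Y \<subseteq> E"
    using X less.prems(1) unfolding indep_of_def by blast+
  then have fin: "finite X" "finite Y"
    using \<open>finite E\<close> by (auto intro: finite_subset)
  have "\<not> Y \<subseteq> X"
    using card_mono[OF fin(1), of Y] less.prems(2) by linarith
  then obtain f0 where f0: "f0 \<in> Y - X" by blast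
  show ?case
  proof (cases "X \<subseteq> Y")
    case True
    with f0 have "insert f0 X \<subseteq> Y" by blast
    with f0 show ?thesis using indep_of_subset[OF less.prems(1)] by blast
  next
    case False
    then obtain e where e: "e \<in> X" "e \<notin> Y" by blast
    define T where "T f = insert e (Y - {f})" for f
    show ?thesis
    proof (cases "\<exists>f\<in>Y - X. T f \<in> indep_of E \<C>")
      case True
      then obtain f where f: "f \<in> Y - X" "T f \<in> indep_of E \<C>" by blast
      have "X - T f = X - Y - {e}" using f e unfolding T_def by blast
      moreover have "card (X - Y - {e}) < card (X - Y)"
        using e fin by (intro card_Diff1_less) auto
      ultimately have "card (X - T f) < card (X - Y)" by simp
      moreover have "card Y > 0" using f fin card_gt_0_iff by blast
      then have "card (T f) = card Y"
        using f e fin unfolding T_def by (simp add: card_Diff_singleton)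
      then have "card X < card (T f)" using less.prems(2) by simp
      ultimately obtain y where "y \<in> T f - X" "insert y X \<in> indep_of E \<C>"
        using less.hyps[OF _ f(2)] by blast
      moreover have "T f - X \<subseteq> Y - X" using e unfolding T_def by blast
      ultimately show ?thesis by blast
    next
      case False
      have circuit_in_T: "\<exists>C\<in>\<C>. C \<subseteq> T f" if "f \<in> Y - X" for f
      proof -
        have "T f \<notin> indep_of E \<C>" using False that by blast
        moreover have "T f \<subseteq> E" using XY_E e unfolding T_def by blast
        ultimately show ?thesis unfolding indep_of_def by blast
      qed
      have T_sub: "T f \<subseteq> insert e Y" for f unfolding T_def by blast
      obtain C0 where C0: "C0 \<in> \<C>" "C0 \<subseteq> T f0" using circuit_in_T[OF f0] by blast
      have Y_free: "\<forall>C\<in>\<C>. \<not> C \<subseteq> Y" using less.prems(1) unfolding indep_of_def by blast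
      have "f \<notin> C0" if f: "f \<in> Y - X" for f
      proof -
        obtain C where C: "C \<in> \<C>" "C \<subseteq> T f" using circuit_in_T[OF f] by blast
        have "C = C0"
          using circuit_unique_in_insert_if_elim[OF elim Y_free C(1) C0(1)]
            order_trans[OF C(2) T_sub] order_trans[OF C0(2) T_sub] .
        with C(2) e(2) f show ?thesis unfolding T_def by blast
      qed
      then have "C0 \<subseteq> X" using C0(2) e(1) unfolding T_def by blast
      then show ?thesis using X C0(1) unfolding indep_of_def by blast
    qed
  qed
qed

lemma matroid_indep_of:
  assumes "finite E" and "\<forall>C\<in>\<C>. C \<noteq> {}" and "circuit_elim \<C>"
  shows "matroid E (indep_of E \<C>)"
  unfolding matroid_def
proof (intro conjI allI impI)
  show "finite E" by fact
  show "\<forall>X\<in>indep_of E \<C>. X \<subseteq> E" unfolding indep_of_def by blast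
  show "{} \<in> indep_of E \<C>" using assms(2) unfolding indep_of_def by blast
  show "Y \<in> indep_of E \<C>" if "X \<in> indep_of E \<C>" "Y \<subseteq> X" for X Y
    using that by (rule indep_of_subset)
  show "\<exists>y\<in>Y - X. insert y X \<in> indep_of E \<C>"
    if "X \<in> indep_of E \<C>" "Y \<in> indep_of E \<C>" "card X < card Y" for X Y
    using indep_of_augment[OF assms(1,3)] that by blast
qed

lemma circuits_indep_of:
  assumes "\<forall>C\<in>\<C>. C \<subseteq> E" and incomparable: "\<forall>C1\<in>\<C>. \<forall>C2\<in>\<C>. C1 \<subseteq> C2 \<longrightarrow> C1 = C2"
  shows "circuits E (indep_of E \<C>) = \<C>"
proof (intro equalityI subsetI)
  fix C assume "C \<in> circuits E (indep_of E \<C>)"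
  then have "C \<subseteq> E" "C \<notin> indep_of E \<C>" and minimal: "\<And>D. D \<subset> C \<Longrightarrow> D \<in> indep_of E \<C>"
    unfolding circuits_def by blast+
  then obtain C' where C': "C' \<in> \<C>" "C' \<subseteq> C"
    unfolding indep_of_def by blast
  have "C' \<notin> indep_of E \<C>" using C'(1) unfolding indep_of_def by blast
  then have "C' = C" using minimal[of C'] C'(2) psubsetI by metis
  with C'(1) show "C \<in> \<C>" by simp
next
  fix C assume C: "C \<in> \<C>"
  have "D \<in> indep_of E \<C>" if D: "D \<subset> C" for D
  proof -
    have "\<not> C' \<subseteq> D" if C': "C' \<in> \<C>" for C'
    proof
      assume "C' \<subseteq> D"
      with D have "C' \<subseteq> C" by blast
      with incomparable C C' have "C' = C" by blast
      with \<open>C' \<subseteq> D\<close> D show False by blast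
    qed
    moreover have "D \<subseteq> E" using D C assms(1) by blast
    ultimately show ?thesis unfolding indep_of_def by blast
  qed
  moreover have "C \<notin> indep_of E \<C>" using C unfolding indep_of_def by blast
  ultimately show "C \<in> circuits E (indep_of E \<C>)"
    using C assms(1) unfolding circuits_def by blast
qed

theorem theorem5p2:
  fixes E :: "'a set" and \<C> :: "'a set set"
  assumes "finite E"
    and "\<forall>C\<in>\<C>. C \<subseteq> E"
    and "\<forall>C\<in>\<C>. C \<noteq> {}"
    and "\<forall>C1\<in>\<C>. \<forall>C2\<in>\<C>. C1 \<subseteq> C2 \<longrightarrow> C1 = C2"
  shows "(\<exists>\<I>. matroid E \<I> \<and> circuits E \<I> = \<C>) \<longleftrightarrow> C3pp \<C>"
proof
  assume "\<exists>\<I>. matroid E \<I> \<and> circuits E \<I> = \<C>"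
  then show "C3pp \<C>" using C3pp_circuits by blast
next
  assume "C3pp \<C>"
  moreover have "\<forall>C\<in>\<C>. finite C" using assms(1,2) finite_subset by blast
  ultimately have "circuit_elim \<C>" using circuit_elim_if_C3pp assms(4) by blast
  then have "matroid E (indep_of E \<C>)" using matroid_indep_of assms(1,3) by blast
  moreover have "circuits E (indep_of E \<C>) = \<C>" using circuits_indep_of assms(2,4) by blast
  ultimately show "\<exists>\<I>. matroid E \<I> \<and> circuits E \<I> = \<C>" by blast
qed

end
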